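(* Let $\mathcal{H}$ be a hypothesis class of functions $h:\mathcal{X}\to\{0,1\}$ with VC-dimension $d$, and consider the source domain (index $0$) and test domain (index $T$). Fix $\delta\in(0,1)$, a sample size $m$, unlabeled samples $S_0$ from the source domain and $S_T$ from the test domain, each of size $m$, and a total number $N$ of labeled training samples. For a sample-ratio vector $\boldsymbol\lambda=(\lambda_0,1-\lambda_0)$ and weight vector $\boldsymbol\omega=(\omega_0,1-\omega_0)$, let \[ \epsilon_T(\boldsymbol\omega,\boldsymbol\lambda,N)=\omega_0\left(\hat d_{\mathcal{H}\Delta\mathcal{H}}(S_0,S_T)+4\sqrt{\frac{2d\log(2m)+\log\frac{2}{\delta}}{m}}+\varepsilon\right)+2\sqrt{\frac{\omega_0^2}{\lambda_0}+\frac{(1-\omega_0)^2}{1-\lambda_0}}\sqrt{\frac{d\log(2N)-\log\delta}{2N}}, \] with $\varepsilon=\min_{h\in\mathcal{H}}\{e_0(h)+e_T(h)\}$ and the convention that a term $0/0$ is taken to be $0$; this is the upper bound on $|e_T(\hat h)-e_T(h_T^* )|$ when $\hat h\in\mathcal{H}$ minimizes the empirical weighted error $\hat e_{\boldsymbol\omega}(h)$ on the training set and $h_T^*=\arg\min_{h\in\mathcal{H}}e_T(h)$. Let $\boldsymbol\omega'=\boldsymbol\lambda'=(1,0)$ (the fully test-time training scenario, in which no test-domain samples are labeled). Then for any $\boldsymbol\lambda\neq\boldsymbol\lambda'$ there exists a weight vector $\boldsymbol\omega$ such that \[ \epsilon_T(\boldsymbol\omega,\boldsymbol\lambda,N)<\epsilon_T(\boldsymbol\omega',\boldsymbol\lambda',N).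 \]
   Context: Binary classification setting with true labeling function $g:\mathcal{X}\to\{0,1\}$. The domain error of $h$ on the source (resp. test) domain with distribution $\mathcal{D}_0$ (resp. $\mathcal{D}_T$) is $e_0(h)=\mathbb{E}_{x\sim\mathcal{D}_0}|h(x)-g(x)|$ (resp. $e_T(h)=\mathbb{E}_{x\sim\mathcal{D}_T}|h(x)-g(x)|$). The training set consists of $N$ labeled samples, a fraction $\lambda_0$ from the source domain and $1-\lambda_0$ from the test domain (selected test nodes labeled), and the empirical weighted error is $\hat e_{\boldsymbol\omega}(h)=\frac{\omega_0}{N_0}\sum_{\text{source samples}}|h(x)-g(x)|+\frac{1-\omega_0}{N_1}\sum_{\text{test samples}}|h(x)-g(x)|$ with $N_0=\lambda_0N$, $N_1=(1-\lambda_0)N$. The $\mathcal{H}\Delta\mathcal{H}$-distance is $d_{\mathcal{H}\Delta\mathcal{H}}(\mathcal{D}_1,\mathcal{D}_2)=2\sup_{h,h'\in\mathcal{H}}|P_{x\sim\mathcal{D}_1}[h(x)\neq h'(x)]-P_{x\sim\mathcal{D}_2}[h(x)\neq h'(x)]|$, and $\hat d_{\mathcal{H}\Delta\mathcal{H}}(S_0,S_T)$ is its value on the empirical distributions of the samples. *)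

theory Defs
  imports "HOL-Probability.Probability"
begin

definition shatters :: "('x \<Rightarrow> bool) set \<Rightarrow> 'x set \<Rightarrow> bool" where
  "shatters H C \<longleftrightarrow> (\<forall>B \<subseteq> C. \<exists>h\<in>H. {x\<in>C. h x} = B)"

definition VC_dim :: "('x \<Rightarrow> bool) set \<Rightarrow> nat \<Rightarrow> bool" where
  "VC_dim H d \<longleftrightarrow>
     (\<exists>C. finite C \<and> card C = d \<and> shatters H C) \<and>
     (\<forall>C. finite C \<and> shatters H C \<longrightarrow> card C \<le> d)"

definition dom_err :: "'x measure \<Rightarrow> ('x \<Rightarrow> bool) \<Rightarrow> ('x \<Rightarrow> bool) \<Rightarrow> real" where
  "dom_err D g h = integral\<^sup>L D (\<lambda>x. \<bar>of_bool (h x) - of_bool (g x)\<bar> :: real)"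

definition emp_disagree :: "'x list \<Rightarrow> ('x \<Rightarrow> bool) \<Rightarrow> ('x \<Rightarrow> bool) \<Rightarrow> real" where
  "emp_disagree S h h' = real (length (filter (\<lambda>x. h x \<noteq> h' x) S)) / real (length S)"

definition dhat_HdH :: "('x \<Rightarrow> bool) set \<Rightarrow> 'x list \<Rightarrow> 'x list \<Rightarrow> real" where
  "dhat_HdH H S0 ST =
     2 * (SUP p\<in>H \<times> H. \<bar>emp_disagree S0 (fst p) (snd p) - emp_disagree ST (fst p) (snd p)\<bar>)"

definition joint_err :: "('x \<Rightarrow> bool) set \<Rightarrow> 'x measure \<Rightarrow> 'x measure \<Rightarrow> ('x \<Rightarrow> bool) \<Rightarrow> real" where
  "joint_err H D0 DT g = (INF h\<in>H. dom_err D0 g h + dom_err DT g h)"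

text \<open>The bound epsilon_T(omega, lambda, N); omega = (w0, 1-w0), lambda = (l0, 1-l0).
  log is the natural logarithm; division by zero yields 0 in HOL, matching the 0/0 = 0 convention.\<close>
definition eps_T ::
  "('x \<Rightarrow> bool) set \<Rightarrow> 'x measure \<Rightarrow> 'x measure \<Rightarrow> ('x \<Rightarrow> bool) \<Rightarrow> nat \<Rightarrow> real \<Rightarrow> nat
   \<Rightarrow> 'x list \<Rightarrow> 'x list \<Rightarrow> real \<Rightarrow> real \<Rightarrow> nat \<Rightarrow> real" where
  "eps_T H D0 DT g d \<delta> m S0 ST w0 l0 N =
     w0 * (dhat_HdH H S0 ST
           + 4 * sqrt ((2 * real d * ln (2 * real m) + ln (2 / \<delta>)) / real m)
           + joint_err H D0 DT g)
     + 2 * sqrt (w0\<^sup>2 / l0 + (1 - w0)\<^sup>2 / (1 - l0))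
         * sqrt ((real d * ln (2 * real N) - ln \<delta>) / (2 * real N))"

end

theory Submission
  imports Defs
begin

text \<open>Take \<open>\<omega> = \<lambda>\<close>. Then \<open>\<omega>\<^sub>0\<^sup>2/\<lambda>\<^sub>0 + (1-\<omega>\<^sub>0)\<^sup>2/(1-\<lambda>\<^sub>0) = 1\<close> (also when
  \<open>\<lambda>\<^sub>0 = 0\<close>, by the \<open>0/0 = 0\<close> convention), so the sample-complexity term of \<open>\<epsilon>\<^sub>T(\<lambda>,\<lambda>,N)\<close>
  equals that of \<open>\<epsilon>\<^sub>T(\<omega>',\<lambda>',N)\<close>, while the domain-discrepancy term is scaled by
  \<open>\<lambda>\<^sub>0 < 1\<close>. That term is strictly positive, because its VC confidence part contains
  \<open>log(2/\<delta>) > 0\<close>; hence the bound strictly decreases.\<close>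

definition discrepancy_term ::
  "('x \<Rightarrow> bool) set \<Rightarrow> 'x measure \<Rightarrow> 'x measure \<Rightarrow> ('x \<Rightarrow> bool) \<Rightarrow> nat \<Rightarrow> real \<Rightarrow> nat
   \<Rightarrow> 'x list \<Rightarrow> 'x list \<Rightarrow> real" where
  "discrepancy_term H D0 DT g d \<delta> m S0 ST =
     dhat_HdH H S0 ST
     + 4 * sqrt ((2 * real d * ln (2 * real m) + ln (2 / \<delta>)) / real m)
     + joint_err H D0 DT g"

definition complexity_term :: "nat \<Rightarrow> real \<Rightarrow> nat \<Rightarrow> real" where
  "complexity_term d \<delta> N = sqrt ((real d * ln (2 * real N) - ln \<delta>) / (2 * real N))"

lemma eps_T_eq:
  "eps_T H D0 DT g d \<delta> m S0 ST w0 l0 N =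
     w0 * discrepancy_term H D0 DT g d \<delta> m S0 ST
     + 2 * sqrt (w0\<^sup>2 / l0 + (1 - w0)\<^sup>2 / (1 - l0)) * complexity_term d \<delta> N"
  unfolding eps_T_def discrepancy_term_def complexity_term_def ..

lemma power2_divide_self [simp]:
  fixes x :: "'a :: field"
  shows "x\<^sup>2 / x = x"
  by (cases "x = 0") (simp_all add: power2_eq_square)

lemma eps_T_diagonal:
  "eps_T H D0 DT g d \<delta> m S0 ST l l N =
     l * discrepancy_term H D0 DT g d \<delta> m S0 ST + 2 * complexity_term d \<delta> N"
  by (simp add: eps_T_eq)

lemma emp_disagree_nonneg: "0 \<le> emp_disagree S h h'"
  unfolding emp_disagree_def by simp

lemma emp_disagree_le_1: "emp_disagree S h h' \<le> 1"
  unfolding emp_disagree_def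
  by (cases "S = []") (simp_all add: divide_le_eq_1 length_filter_le)

lemma dhat_HdH_nonneg:
  assumes "h \<in> H"
  shows "0 \<le> dhat_HdH H S0 ST"
proof -
  let ?gap = "\<lambda>p. \<bar>emp_disagree S0 (fst p) (snd p) - emp_disagree ST (fst p) (snd p)\<bar>"
  have "?gap p \<le> 1" for p
    by (smt (verit) emp_disagree_le_1 emp_disagree_nonneg)
  then have "bdd_above (?gap ` (H \<times> H))"
    by (intro bdd_aboveI[where M = 1]) blast
  then have "0 \<le> (SUP p\<in>H \<times> H. ?gap p)"
    by (rule cSUP_upper2[of _ _ "(h, h)"]) (simp_all add: assms)
  then show ?thesis
    unfolding dhat_HdH_def by simp
qed

lemma joint_err_nonneg:
  assumes "H \<noteq> {}"
  shows "0 \<le> joint_err H D0 DT g"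
  unfolding joint_err_def dom_err_def
  by (rule cINF_greatest[OF assms]) (intro add_nonneg_nonneg integral_nonneg; simp)

lemma discrepancy_term_pos:
  assumes "H \<noteq> {}" and "0 < \<delta>" and "\<delta> < 1" and "0 < m"
  shows "0 < discrepancy_term H D0 DT g d \<delta> m S0 ST"
proof -
  have "0 \<le> ln (2 * real m)" and "0 < ln (2 / \<delta>)"
    using assms(2-4) by simp_all
  then have "0 < (2 * real d * ln (2 * real m) + ln (2 / \<delta>)) / real m"
    using assms(4) by (intro divide_pos_pos add_nonneg_pos mult_nonneg_nonneg) auto
  moreover obtain h where "h \<in> H"
    using assms(1) by blast
  ultimately show ?thesis
    unfolding discrepancy_term_def
    using dhat_HdH_nonneg[of h H S0 ST] joint_err_nonneg[OF assms(1), of D0 DT g]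
    by (smt (verit) real_sqrt_gt_zero)
qed

theorem theorem2:
  fixes H :: "('x \<Rightarrow> bool) set" and g :: "'x \<Rightarrow> bool"
    and D0 DT :: "'x measure" and d m N :: nat and \<delta> l0 :: real
    and S0 ST :: "'x list"
  assumes "prob_space D0" and "prob_space DT"
    and "space D0 = space DT"
    and "g \<in> measurable D0 (count_space UNIV)" and "g \<in> measurable DT (count_space UNIV)"
    and "\<forall>h\<in>H. h \<in> measurable D0 (count_space UNIV) \<and> h \<in> measurable DT (count_space UNIV)"
    and "H \<noteq> {}" and "VC_dim H d"
    and "0 < \<delta>" and "\<delta> < 1"
    and "0 < m" and "length S0 = m" and "length ST = m"
    and "0 < N"
    and "0 \<le> l0" and "l0 \<le> 1"
    and "(l0, 1 - l0) \<noteq> ((1::real), (0::real))"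
  shows "\<exists>w0. 0 \<le> w0 \<and> w0 \<le> 1 \<and> (l0 = 0 \<longrightarrow> w0 = 0) \<and> (l0 = 1 \<longrightarrow> w0 = 1) \<and>
           eps_T H D0 DT g d \<delta> m S0 ST w0 l0 N < eps_T H D0 DT g d \<delta> m S0 ST 1 1 N"
proof (intro exI[of _ l0] conjI impI)
  have "l0 < 1"
    using assms(16,17) by auto
  moreover have "0 < discrepancy_term H D0 DT g d \<delta> m S0 ST"
    using discrepancy_term_pos assms(7,9-11) by blast
  ultimately show "eps_T H D0 DT g d \<delta> m S0 ST l0 l0 N < eps_T H D0 DT g d \<delta> m S0 ST 1 1 N"
    unfolding eps_T_diagonal by simp
qed (use assms(15,16) in simp_all)

end
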